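(* Let $p>1$, let $\varphi:\mathbb{R}^n\to\mathbb{R}\cup\{+\infty\}$ be proper and lower semicontinuous, and let $\bar x\in\operatorname{dom}\varphi$. Then: (a) if $\bar x\in\operatorname{argmin}\varphi$, then $\bar x$ is a $p$-calm point of $\varphi$ with any constant $M>0$; (b) if $\operatorname{prox}^p_{\gamma\varphi}(\bar x)=\{\bar x\}$ (for some $\gamma>0$), then $\bar x$ is a $p$-calm point of $\varphi$ with constant $M=\frac{1}{p\gamma}$; (c) if $\bar x$ is a $p$-calm point of $\varphi$ with constant $M$, then for each $\gamma\in(0,\frac{1}{pM}]$, $\operatorname{prox}^p_{\gamma\varphi}(\bar x)=\{\bar x\}$; (d) if for some $\hat\gamma>0$, $\bar x\in\mathrm{Fix}(\operatorname{prox}^p_{\hat\gamma\varphi})$, then for each $\gamma\in(0,\hat\gamma)$, $\operatorname{prox}^p_{\gamma\varphi}(\bar x)=\{\bar x\}$, and hence $\bar x$ is a $p$-calm point of $\varphi$ with constant $M=\frac{1}{p\gamma}$; (e) if $\bar x$ is a $p$-calm point of $\varphi$, then $\varphi$ is high-order prox-bounded.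
   Context: $\operatorname{prox}^p_{\gamma\varphi}(x):=\operatorname{argmin}_{y}\big(\varphi(y)+\frac{1}{p\gamma}\|x-y\|^p\big)$; $\mathrm{Fix}(\operatorname{prox}^p_{\gamma\varphi})=\{x:x\in\operatorname{prox}^p_{\gamma\varphi}(x)\}$. A point $\bar x\in\operatorname{dom}\varphi$ is a $p$-calm point of $\varphi$ with constant $M>0$ if $\varphi(x)+M\|x-\bar x\|^p>\varphi(\bar x)$ for all $x\neq\bar x$. $\varphi$ is high-order prox-bounded (order $p$) if $\inf_y\big(\varphi(y)+\frac{1}{p\gamma}\|x-y\|^p\big)>-\infty$ for some $\gamma>0$ and $x\in\mathbb{R}^n$. *)

theory Defs
  imports "HOL-Analysis.Analysis" "HOL-Library.Extended_Real" "HOL-Library.Liminf_Limsup"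
begin

(* Extended-real-valued functions phi : R^n -> R \<union> {+\<infinity>} are modelled as ereal-valued
   functions; properness excludes the value -\<infinity> and requires a nonempty domain. *)

definition edom :: "('a \<Rightarrow> ereal) \<Rightarrow> 'a set" where
  "edom \<phi> = {x. \<phi> x < \<infinity>}"

definition proper_fun :: "('a \<Rightarrow> ereal) \<Rightarrow> bool" where
  "proper_fun \<phi> \<longleftrightarrow> (\<forall>x. \<phi> x \<noteq> -\<infinity>) \<and> edom \<phi> \<noteq> {}"

definition lsc_fun :: "('a::topological_space \<Rightarrow> ereal) \<Rightarrow> bool" where
  "lsc_fun \<phi> \<longleftrightarrow> (\<forall>x. \<phi> x \<le> Liminf (at x) \<phi>)"

definition argmin_set :: "('a \<Rightarrow> ereal) \<Rightarrow> 'a set" where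
  "argmin_set \<phi> = {y. \<forall>z. \<phi> y \<le> \<phi> z}"

definition hobj :: "real \<Rightarrow> real \<Rightarrow> ('a::real_normed_vector \<Rightarrow> ereal) \<Rightarrow> 'a \<Rightarrow> 'a \<Rightarrow> ereal" where
  "hobj p \<gamma> \<phi> x y = \<phi> y + ereal (1 / (p * \<gamma>) * norm (x - y) powr p)"

definition hprox :: "real \<Rightarrow> real \<Rightarrow> ('a::real_normed_vector \<Rightarrow> ereal) \<Rightarrow> 'a \<Rightarrow> 'a set" where
  "hprox p \<gamma> \<phi> x = argmin_set (hobj p \<gamma> \<phi> x)"

definition hprox_fix :: "real \<Rightarrow> real \<Rightarrow> ('a::real_normed_vector \<Rightarrow> ereal) \<Rightarrow> 'a set" where
  "hprox_fix p \<gamma> \<phi> = {x. x \<in> hprox p \<gamma> \<phi> x}"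

definition p_calm :: "real \<Rightarrow> ('a::real_normed_vector \<Rightarrow> ereal) \<Rightarrow> real \<Rightarrow> 'a \<Rightarrow> bool" where
  "p_calm p \<phi> M xb \<longleftrightarrow> xb \<in> edom \<phi> \<and> M > 0 \<and>
     (\<forall>x. x \<noteq> xb \<longrightarrow> \<phi> x + ereal (M * norm (x - xb) powr p) > \<phi> xb)"

definition ho_prox_bounded :: "real \<Rightarrow> ('a::real_normed_vector \<Rightarrow> ereal) \<Rightarrow> bool" where
  "ho_prox_bounded p \<phi> \<longleftrightarrow> (\<exists>\<gamma>>0. \<exists>x. (INF y. hobj p \<gamma> \<phi> x y) > -\<infinity>)"

end

theory Submission
  imports Defs
begin

text \<open>All five claims reduce to one observation: for \<open>M = 1/(p\<gamma>)\<close> the calmness inequality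
  at \<open>x\<close> says precisely that \<open>x\<close> is the strict global minimiser of the objective
  \<open>y \<mapsto> \<phi> y + 1/(p\<gamma>) \<parallel>x - y\<parallel>\<^sup>p\<close>, whose value at \<open>y = x\<close> is \<open>\<phi> x\<close>. Calmness is monotone in
  \<open>M\<close>, and a non-strict minimality of \<open>x\<close> for the parameter \<open>\<gamma>h\<close> (or for \<open>\<phi>\<close> itself)
  becomes strict once the coefficient of \<open>\<parallel>x - y\<parallel>\<^sup>p\<close> is increased.\<close>

lemma argmin_set_eq_singleton_iff:
  fixes f :: "'a \<Rightarrow> ereal"
  shows "argmin_set f = {x} \<longleftrightarrow> (\<forall>y. y \<noteq> x \<longrightarrow> f x < f y)"
proof
  assume min: "argmin_set f = {x}"
  show "\<forall>y. y \<noteq> x \<longrightarrow> f x < f y"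
  proof (intro allI impI)
    fix y assume "y \<noteq> x"
    then have "y \<notin> argmin_set f" using min by simp
    then obtain z where "f z < f y" by (auto simp: argmin_set_def not_le)
    moreover have "f x \<le> f z" using min by (auto simp: argmin_set_def)
    ultimately show "f x < f y" by simp
  qed
qed (auto simp: argmin_set_def less_imp_le, meson leD)

lemma hobj_self [simp]: "hobj p \<gamma> \<phi> x x = \<phi> x"
  by (simp add: hobj_def)

lemma ereal_le_add_imp_less:
  fixes a b :: ereal
  assumes "b \<le> a + ereal c" "c < d" "a \<noteq> -\<infinity>" "b < \<infinity>"
  shows "b < a + ereal d"
  using assms by (cases a; cases b) auto

lemma p_calm_mono:
  assumes "p_calm p \<phi> M x" "M \<le> M'"
  shows "p_calm p \<phi> M' x"
  unfolding p_calm_def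
proof (intro conjI allI impI)
  show "x \<in> edom \<phi>" "0 < M'" using assms by (auto simp: p_calm_def)
  fix y assume "y \<noteq> x"
  then have "\<phi> x < \<phi> y + ereal (M * norm (y - x) powr p)"
    using assms(1) by (simp add: p_calm_def)
  also have "\<dots> \<le> \<phi> y + ereal (M' * norm (y - x) powr p)"
    using assms(2) by (intro add_left_mono) (simp add: mult_right_mono)
  finally show "\<phi> x < \<phi> y + ereal (M' * norm (y - x) powr p)" .
qed

lemma p_calm_iff_hprox_eq_singleton:
  assumes "p > 0" "\<gamma> > 0" "x \<in> edom \<phi>"
  shows "p_calm p \<phi> (1 / (p * \<gamma>)) x \<longleftrightarrow> hprox p \<gamma> \<phi> x = {x}"
  using assms
  by (simp add: p_calm_def hprox_def argmin_set_eq_singleton_iff hobj_def norm_minus_commute)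

lemma p_calm_of_argmin:
  assumes "proper_fun \<phi>" "x \<in> edom \<phi>" "x \<in> argmin_set \<phi>" "M > 0"
  shows "p_calm p \<phi> M x"
  unfolding p_calm_def
proof (intro conjI allI impI)
  fix y assume "y \<noteq> x"
  have "\<phi> x \<le> \<phi> y + ereal 0"
    using assms(3) by (simp add: argmin_set_def)
  moreover have "0 < M * norm (y - x) powr p"
    using assms(4) \<open>y \<noteq> x\<close> by simp
  ultimately show "\<phi> x < \<phi> y + ereal (M * norm (y - x) powr p)"
    using assms(1,2) by (intro ereal_le_add_imp_less) (auto simp: proper_fun_def edom_def)
qed (use assms in auto)

lemma p_calm_of_hprox_fix:
  assumes "proper_fun \<phi>" "x \<in> edom \<phi>" "p > 0" "x \<in> hprox_fix p \<gamma>h \<phi>" "0 < \<gamma>" "\<gamma> < \<gamma>h"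
  shows "p_calm p \<phi> (1 / (p * \<gamma>)) x"
  unfolding p_calm_def
proof (intro conjI allI impI)
  fix y assume "y \<noteq> x"
  have "hobj p \<gamma>h \<phi> x x \<le> hobj p \<gamma>h \<phi> x y"
    using assms(4) by (simp add: hprox_fix_def hprox_def argmin_set_def)
  then have "\<phi> x \<le> \<phi> y + ereal (1 / (p * \<gamma>h) * norm (y - x) powr p)"
    by (simp add: hobj_def norm_minus_commute)
  moreover have "1 / (p * \<gamma>h) * norm (y - x) powr p < 1 / (p * \<gamma>) * norm (y - x) powr p"
    using assms(3,5,6) \<open>y \<noteq> x\<close> by (intro mult_strict_right_mono) (simp_all add: frac_less2)
  ultimately show "\<phi> x < \<phi> y + ereal (1 / (p * \<gamma>) * norm (y - x) powr p)"
    using assms(1,2) by (intro ereal_le_add_imp_less) (auto simp: proper_fun_def edom_def)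
qed (use assms in auto)

lemma ho_prox_bounded_of_p_calm:
  assumes "proper_fun \<phi>" "p > 0" "p_calm p \<phi> M x"
  shows "ho_prox_bounded p \<phi>"
proof -
  define \<gamma> where "\<gamma> = 1 / (p * M)"
  have "M > 0" "x \<in> edom \<phi>" using assms(3) by (auto simp: p_calm_def)
  then have "\<gamma> > 0" "1 / (p * \<gamma>) = M" using assms(2) by (auto simp: \<gamma>_def)
  then have "hprox p \<gamma> \<phi> x = {x}"
    using p_calm_iff_hprox_eq_singleton assms(2,3) \<open>x \<in> edom \<phi>\<close> by metis
  then have "x \<in> argmin_set (hobj p \<gamma> \<phi> x)"
    by (simp add: hprox_def)
  then have "\<phi> x \<le> (INF y. hobj p \<gamma> \<phi> x y)"
    by (simp add: argmin_set_def INF_greatest)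
  moreover have "-\<infinity> < \<phi> x"
    using assms(1) by (simp add: proper_fun_def)
  ultimately show ?thesis
    unfolding ho_prox_bounded_def using \<open>\<gamma> > 0\<close> by (meson less_le_trans)
qed

theorem theorem3:
  fixes p :: real and \<phi> :: "real ^ 'n \<Rightarrow> ereal" and xb :: "real ^ 'n"
  assumes "p > 1" and "proper_fun \<phi>" and "lsc_fun \<phi>" and "xb \<in> edom \<phi>"
  shows "(xb \<in> argmin_set \<phi> \<longrightarrow> (\<forall>M>0. p_calm p \<phi> M xb))
    \<and> (\<forall>\<gamma>>0. hprox p \<gamma> \<phi> xb = {xb} \<longrightarrow> p_calm p \<phi> (1 / (p * \<gamma>)) xb)
    \<and> (\<forall>M. p_calm p \<phi> M xb \<longrightarrow>
          (\<forall>\<gamma>. 0 < \<gamma> \<and> \<gamma> \<le> 1 / (p * M) \<longrightarrow> hprox p \<gamma> \<phi> xb = {xb}))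
    \<and> (\<forall>\<gamma>h>0. xb \<in> hprox_fix p \<gamma>h \<phi> \<longrightarrow>
          (\<forall>\<gamma>. 0 < \<gamma> \<and> \<gamma> < \<gamma>h \<longrightarrow>
             hprox p \<gamma> \<phi> xb = {xb} \<and> p_calm p \<phi> (1 / (p * \<gamma>)) xb))
    \<and> ((\<exists>M. p_calm p \<phi> M xb) \<longrightarrow> ho_prox_bounded p \<phi>)"
proof (intro conjI allI impI)
  have p: "p > 0" using assms(1) by simp
  note calm_iff = p_calm_iff_hprox_eq_singleton[OF p _ assms(4)]
  show "p_calm p \<phi> M xb" if "xb \<in> argmin_set \<phi>" "M > 0" for M
    using p_calm_of_argmin assms(2,4) that .
  show "p_calm p \<phi> (1 / (p * \<gamma>)) xb" if "\<gamma> > 0" "hprox p \<gamma> \<phi> xb = {xb}" for \<gamma>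
    using calm_iff that by blast
  show "hprox p \<gamma> \<phi> xb = {xb}" if "p_calm p \<phi> M xb" "0 < \<gamma> \<and> \<gamma> \<le> 1 / (p * M)" for M \<gamma>
  proof -
    have "M \<le> 1 / (p * \<gamma>)"
      using that p by (auto simp: p_calm_def field_simps)
    then show ?thesis
      using calm_iff p_calm_mono that by blast
  qed
  show calm: "p_calm p \<phi> (1 / (p * \<gamma>)) xb"
    if "xb \<in> hprox_fix p \<gamma>h \<phi>" "0 < \<gamma> \<and> \<gamma> < \<gamma>h" for \<gamma>h \<gamma>
    using p_calm_of_hprox_fix assms(2,4) p that by blast
  then show "hprox p \<gamma> \<phi> xb = {xb}"
    if "xb \<in> hprox_fix p \<gamma>h \<phi>" "0 < \<gamma> \<and> \<gamma> < \<gamma>h" for \<gamma>h \<gamma>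
    using calm_iff that by blast
  show "ho_prox_bounded p \<phi>" if "\<exists>M. p_calm p \<phi> M xb"
    using ho_prox_bounded_of_p_calm assms(2) p that by blast
qed

end
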